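(* Let $(A,S,P,C_w,C_l)$ be a common knowledge distinguishing debate game. Let $m,n$ be positive integers and $\varepsilon\in[0,1]$ be such that, if $s$ is sampled according to $P$, the probability that $|C_w(s)|<m$ or $|C_l(s)|>n$ is at most $\varepsilon$. Suppose $m>n$ and set $r=m/n$. Let $\alpha\in(0,1]$ and $k,l$ be positive integers. Let $(\mu_i)_{i=1}^k$ be a non-increasing sequence in $(0,1]$, and $(\nu_j)_{j=1}^l$ a non-decreasing sequence in $[\alpha/\log_2(r),\infty)$. Define the following quantities: - $\theta_{i,j}=e^{-\mu_i\alpha r^{1-\nu_j}}$ for $1\le i\le k$, $1\le j\le l$; - $\zeta_i=e^{-\alpha r}\left(\frac{e}{\mu_i}\right)^{\mu_i\alpha r}$ for $1\le i\le k$, and $\zeta_0=1$; - $\xi_j=e^{-\alpha}r^{-\nu_j\log_2\left(\frac{\nu_j\log_2(r)}{e\alpha}\right)}$ for $1\le j\le l$, and $\xi_0=1$. Then there exists a policy with error at most $\sum_{i=1}^k\sum_{j=1}^l\theta_{i,j}\zeta_{i-1}\xi_{j-1}+\zeta_k+\xi_l+\varepsilon$.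
   Context: Let $\delta$ be a special default action. A CKDDG is a tuple $(A,S,P,C_w,C_l)$ with $A$ a finite set, $\delta\notin A$, $S$ a finite set of scenarios, $P$ a probability mass function on $S$, and $C_w,C_l:S\to\mathcal P(A)$. $C_w(s)$ and $C_l(s)$ are the actions available to the desired winner and the desired loser in scenario $s$. A policy is a map $M:\{1,2\}\times(A\cup\{\delta\})^2\to[0,1]$ with $M(1,a_1,a_2)+M(2,a_1,a_2)=1$ for all $a_1,a_2$. For a policy $M$ and $j\in\{1,2\}$, $s\in S$, let $w^i_M((j,s))$ be the value to agent $i$ of the two-player zero-sum game with payoff matrix $M(i,\cdot,\cdot)$ in which agent $j$ (the desired winner) chooses from $C_w(s)\cup\{\delta\}$ and the other agent chooses from $C_l(s)\cup\{\delta\}$. The error of $M$ is $\mathbb E_{s\sim P}\left[\frac{w^1_M((2,s))+w^2_M((1,s))}{2}\right]$, i.e. the probability that the desired loser wins when the roles are assigned uniformly at random. *)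

theory Defs
  imports Complex_Main
begin

text \<open>Actions are elements of type 'a; the default action delta is None,
  an ordinary action a is Some a (so delta is automatically not in A).
  Agents are numbered 1 and 2.\<close>

definition ckddg :: "'a set \<Rightarrow> 's set \<Rightarrow> ('s \<Rightarrow> real) \<Rightarrow> ('s \<Rightarrow> 'a set) \<Rightarrow> ('s \<Rightarrow> 'a set) \<Rightarrow> bool" where
  "ckddg A S P Cw Cl \<longleftrightarrow> finite A \<and> finite S \<and> (\<forall>s\<in>S. P s \<ge> 0) \<and> sum P S = 1
     \<and> (\<forall>s\<in>S. Cw s \<subseteq> A \<and> Cl s \<subseteq> A)"

text \<open>Policy: M i a1 a2 is the probability that agent i is declared winner.\<close>
definition is_policy :: "'a set \<Rightarrow> (nat \<Rightarrow> 'a option \<Rightarrow> 'a option \<Rightarrow> real) \<Rightarrow> bool" where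
  "is_policy A M \<longleftrightarrow> (\<forall>a1\<in>insert None (Some ` A). \<forall>a2\<in>insert None (Some ` A).
      M 1 a1 a2 \<in> {0..1} \<and> M 2 a1 a2 \<in> {0..1} \<and> M 1 a1 a2 + M 2 a1 a2 = 1)"

definition mixed :: "'b set \<Rightarrow> ('b \<Rightarrow> real) set" where
  "mixed X = {p. (\<forall>x. p x \<ge> 0) \<and> (\<forall>x. x \<notin> X \<longrightarrow> p x = 0) \<and> sum p X = 1}"

text \<open>w^i_M((j,s)): value to agent i of the zero-sum game with payoff M i,
  where agent j (desired winner) plays from Cw s + delta and the other agent from Cl s + delta.\<close>
definition game_value :: "(nat \<Rightarrow> 'a option \<Rightarrow> 'a option \<Rightarrow> real) \<Rightarrow> ('s \<Rightarrow> 'a set) \<Rightarrow> ('s \<Rightarrow> 'a set)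
     \<Rightarrow> nat \<Rightarrow> nat \<Rightarrow> 's \<Rightarrow> real" where
  "game_value M Cw Cl i j s =
     (let W = insert None (Some ` Cw s); L = insert None (Some ` Cl s);
          X1 = (if j = 1 then W else L); X2 = (if j = 1 then L else W);
          pay = (\<lambda>p1 p2. \<Sum>a1\<in>X1. \<Sum>a2\<in>X2. p1 a1 * p2 a2 * M i a1 a2)
      in if i = 1 then (SUP p1\<in>mixed X1. INF p2\<in>mixed X2. pay p1 p2)
         else (SUP p2\<in>mixed X2. INF p1\<in>mixed X1. pay p1 p2))"

definition policy_error :: "'s set \<Rightarrow> ('s \<Rightarrow> real) \<Rightarrow> ('s \<Rightarrow> 'a set) \<Rightarrow> ('s \<Rightarrow> 'a set)
     \<Rightarrow> (nat \<Rightarrow> 'a option \<Rightarrow> 'a option \<Rightarrow> real) \<Rightarrow> real" where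
  "policy_error S P Cw Cl M =
     (\<Sum>s\<in>S. P s * ((game_value M Cw Cl 1 2 s + game_value M Cw Cl 2 1 s) / 2))"

definition theta :: "real \<Rightarrow> real \<Rightarrow> (nat \<Rightarrow> real) \<Rightarrow> (nat \<Rightarrow> real) \<Rightarrow> nat \<Rightarrow> nat \<Rightarrow> real" where
  "theta \<alpha> r \<mu> \<nu> i j = exp (- (\<mu> i * \<alpha> * r powr (1 - \<nu> j)))"

definition zeta :: "real \<Rightarrow> real \<Rightarrow> (nat \<Rightarrow> real) \<Rightarrow> nat \<Rightarrow> real" where
  "zeta \<alpha> r \<mu> i = (if i = 0 then 1
      else exp (- (\<alpha> * r)) * (exp 1 / \<mu> i) powr (\<mu> i * \<alpha> * r))"

definition xi :: "real \<Rightarrow> real \<Rightarrow> (nat \<Rightarrow> real) \<Rightarrow> nat \<Rightarrow> real" where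
  "xi \<alpha> r \<nu> j = (if j = 0 then 1
      else exp (- \<alpha>) * r powr (- (\<nu> j * log 2 (\<nu> j * log 2 r / (exp 1 * \<alpha>)))))"

end

theory Submission
  imports Defs "HOL-Library.FuncSet"
begin

text \<open>
  The policy is found by the probabilistic method. Keep every action of agent 1, and independently
  every action of agent 2, with probability p = \<alpha>/n; a kept action beats a discarded one and the
  default, and two kept actions are compared by a uniformly random relation D. In a scenario with
  |C_w| \<ge> m and |C_l| \<le> n, the kept actions of the desired winner number Y with E Y \<ge> \<alpha> r, those
  of the desired loser X with E X \<le> \<alpha>, and the winner can only lose if none of its kept actions
  beats all kept actions of the loser, which over D has probability (1 - 2^-X)^Y.
  To average this over X and Y take the least i with Y > \<mu>_i \<alpha> r and the least j with
  X < \<nu>_j log_2 r: then the failure probability is at most \<theta>_ij, while Y \<le> \<mu>_(i-1) \<alpha> r and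
  X \<ge> \<nu>_(j-1) log_2 r are Chernoff events of probability at most \<zeta>_(i-1) and \<xi>_(j-1); if i or j
  does not exist, an event of probability at most \<zeta>_k or \<xi>_l has occurred. Hence the expected
  error of the random policy is at most the stated bound, and some realisation attains it.
\<close>

section \<open>Finite weighted averages\<close>

definition weighted_avg :: "('b \<Rightarrow> real) \<Rightarrow> 'b set \<Rightarrow> ('b \<Rightarrow> real) \<Rightarrow> real" where
  "weighted_avg w X f = (\<Sum>x\<in>X. w x * f x)"

lemma weighted_avg_mono:
  assumes "\<And>x. x \<in> X \<Longrightarrow> 0 \<le> w x" "\<And>x. x \<in> X \<Longrightarrow> f x \<le> g x"
  shows "weighted_avg w X f \<le> weighted_avg w X g"
  unfolding weighted_avg_def by (intro sum_mono mult_left_mono assms)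

lemma weighted_avg_nonneg:
  "(\<And>x. x \<in> X \<Longrightarrow> 0 \<le> w x) \<Longrightarrow> (\<And>x. x \<in> X \<Longrightarrow> 0 \<le> f x) \<Longrightarrow> 0 \<le> weighted_avg w X f"
  unfolding weighted_avg_def by (intro sum_nonneg mult_nonneg_nonneg)

lemma weighted_avg_const: "sum w X = 1 \<Longrightarrow> weighted_avg w X (\<lambda>_. c) = c"
  unfolding weighted_avg_def by (simp add: sum_distrib_right[symmetric])

lemma weighted_avg_add:
  "weighted_avg w X (\<lambda>x. f x + g x) = weighted_avg w X f + weighted_avg w X g"
  unfolding weighted_avg_def by (simp add: distrib_left sum.distrib)

lemma weighted_avg_diff:
  "weighted_avg w X (\<lambda>x. f x - g x) = weighted_avg w X f - weighted_avg w X g"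
  unfolding weighted_avg_def by (simp add: right_diff_distrib sum_subtractf)

lemma weighted_avg_mult_left: "weighted_avg w X (\<lambda>x. c * f x) = c * weighted_avg w X f"
  unfolding weighted_avg_def by (simp add: sum_distrib_left mult_ac)

lemma weighted_avg_mult_right: "weighted_avg w X (\<lambda>x. f x * c) = weighted_avg w X f * c"
  unfolding weighted_avg_def by (simp add: sum_distrib_right mult.assoc)

lemma weighted_avg_divide: "weighted_avg w X (\<lambda>x. f x / c) = weighted_avg w X f / c"
  unfolding weighted_avg_def by (simp add: sum_divide_distrib)

lemma weighted_avg_sum:
  "weighted_avg w X (\<lambda>x. \<Sum>i\<in>I. f i x) = (\<Sum>i\<in>I. weighted_avg w X (f i))"
  unfolding weighted_avg_def by (simp add: sum_distrib_left sum.swap[of _ I])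

lemma weighted_avg_swap:
  "weighted_avg w X (\<lambda>x. weighted_avg v Y (f x)) = weighted_avg v Y (\<lambda>y. weighted_avg w X (\<lambda>x. f x y))"
  unfolding weighted_avg_def by (simp add: sum_distrib_left sum.swap[of _ Y] mult_ac)

lemma weighted_avg_le_imp_ex:
  assumes "finite X" "\<And>x. x \<in> X \<Longrightarrow> 0 \<le> w x" "sum w X = 1" "weighted_avg w X f \<le> c"
  shows "\<exists>x\<in>X. f x \<le> c"
proof (rule ccontr)
  assume "\<not> (\<exists>x\<in>X. f x \<le> c)"
  obtain x0 where "x0 \<in> X" "w x0 \<noteq> 0"
    using assms(3) by (metis sum.neutral zero_neq_one)
  then have "weighted_avg w X (\<lambda>_. c) < weighted_avg w X f"
    unfolding weighted_avg_def using assms(1,2) \<open>\<not> (\<exists>x\<in>X. f x \<le> c)\<close>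
    by (intro sum_strict_mono_ex1) (auto intro!: mult_left_mono bexI[of _ x0] simp: less_le)
  then show False using assms(3,4) by (simp add: weighted_avg_const)
qed

section \<open>Random subsets and Chernoff bounds\<close>

definition bernoulli_weight :: "real \<Rightarrow> 'a set \<Rightarrow> ('a \<Rightarrow> bool) \<Rightarrow> real" where
  "bernoulli_weight p A \<sigma> = (\<Prod>x\<in>A. if \<sigma> x then p else 1 - p)"

abbreviation bernoulli_avg :: "real \<Rightarrow> 'a set \<Rightarrow> (('a \<Rightarrow> bool) \<Rightarrow> real) \<Rightarrow> real" where
  "bernoulli_avg p A \<equiv> weighted_avg (bernoulli_weight p A) (A \<rightarrow>\<^sub>E UNIV)"

lemma bernoulli_weight_nonneg: "0 \<le> p \<Longrightarrow> p \<le> 1 \<Longrightarrow> 0 \<le> bernoulli_weight p A \<sigma>"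
  unfolding bernoulli_weight_def by (intro prod_nonneg) auto

lemma bernoulli_avg_prod:
  assumes "finite A" "W \<subseteq> A"
  shows "bernoulli_avg p A (\<lambda>\<sigma>. \<Prod>x\<in>W. h x (\<sigma> x)) = (\<Prod>x\<in>W. p * h x True + (1 - p) * h x False)"
proof -
  have W: "{x\<in>A. x \<in> W} = W" using assms(2) by blast
  have extend: "(\<Prod>x\<in>W. g x) = (\<Prod>x\<in>A. if x \<in> W then g x else 1)" for g :: "'a \<Rightarrow> real"
    using prod.inter_filter[OF assms(1), of g "\<lambda>x. x \<in> W"] by (simp add: W)
  have "bernoulli_avg p A (\<lambda>\<sigma>. \<Prod>x\<in>W. h x (\<sigma> x))
      = (\<Sum>\<sigma>\<in>A \<rightarrow>\<^sub>E UNIV. \<Prod>x\<in>A. (if \<sigma> x then p else 1 - p) * (if x \<in> W then h x (\<sigma> x) else 1))"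
    unfolding weighted_avg_def bernoulli_weight_def extend by (simp add: prod.distrib)
  also have "\<dots> = (\<Prod>x\<in>A. \<Sum>b\<in>UNIV. (if b then p else 1 - p) * (if x \<in> W then h x b else 1))"
    by (rule prod_sum_PiE[symmetric]) (simp_all add: assms(1))
  also have "\<dots> = (\<Prod>x\<in>W. p * h x True + (1 - p) * h x False)"
    unfolding extend by (intro prod.cong) (auto simp: UNIV_bool)
  finally show ?thesis .
qed

lemma sum_bernoulli_weight: "finite A \<Longrightarrow> sum (bernoulli_weight p A) (A \<rightarrow>\<^sub>E UNIV) = 1"
  using bernoulli_avg_prod[of A "{}" p] by (simp add: weighted_avg_def)

lemma bernoulli_avg_power_card:
  assumes "finite A" "W \<subseteq> A"
  shows "bernoulli_avg p A (\<lambda>\<sigma>. c ^ card {x\<in>W. \<sigma> x}) = (1 - p + p * c) ^ card W"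
proof -
  have "finite W" using assms finite_subset by blast
  then have "c ^ card {x\<in>W. \<sigma> x} = (\<Prod>x\<in>W. if \<sigma> x then c else 1)" for \<sigma> :: "'a \<Rightarrow> bool"
    by (simp add: prod.inter_filter[symmetric])
  then show ?thesis
    using bernoulli_avg_prod[OF assms, of p "\<lambda>_ b. if b then c else 1"] by (simp add: algebra_simps)
qed

lemma bernoulli_avg_power_card_le_exp:
  fixes p c :: real
  assumes "finite A" "W \<subseteq> A" "0 \<le> p" "p \<le> 1" "0 \<le> c"
  shows "bernoulli_avg p A (\<lambda>\<sigma>. c ^ card {x\<in>W. \<sigma> x}) \<le> exp (p * card W * (c - 1))"
proof -
  have "(1 - p + p * c) ^ card W \<le> exp (p * (c - 1)) ^ card W"
    using assms(3-5) exp_ge_add_one_self[of "p * (c - 1)"]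
    by (intro power_mono) (auto simp: algebra_simps intro: add_increasing2)
  then show ?thesis
    by (simp add: bernoulli_avg_power_card[OF assms(1,2)] exp_of_nat_mult[symmetric] mult_ac)
qed

lemma bernoulli_upper_tail:
  fixes p \<alpha> t :: real
  assumes A: "finite A" "L \<subseteq> A" and p: "0 \<le> p" "p \<le> 1" "p * card L \<le> \<alpha>"
    and t: "0 < \<alpha>" "\<alpha> \<le> t"
  shows "bernoulli_avg p A (\<lambda>\<sigma>. of_bool (t \<le> card {x\<in>L. \<sigma> x})) \<le> exp (- \<alpha>) * (exp 1 * \<alpha> / t) powr t"
proof -
  define q where "q = t / \<alpha>"
  have q: "1 \<le> q" using t by (simp add: q_def)
  have markov: "of_bool (t \<le> real N) \<le> q ^ N / q powr t" for N
  proof (cases "t \<le> real N")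
    case True
    then have "q powr t \<le> q ^ N" using q by (metis powr_mono powr_realpow zero_less_one less_le_trans)
    then show ?thesis using True q by simp
  qed (use q in simp)
  have "bernoulli_avg p A (\<lambda>\<sigma>. of_bool (t \<le> card {x\<in>L. \<sigma> x}))
      \<le> bernoulli_avg p A (\<lambda>\<sigma>. q ^ card {x\<in>L. \<sigma> x}) / q powr t"
    unfolding weighted_avg_divide[symmetric]
    by (intro weighted_avg_mono bernoulli_weight_nonneg p markov)
  also have "\<dots> \<le> exp (p * card L * (q - 1)) / q powr t"
    using q p by (intro divide_right_mono bernoulli_avg_power_card_le_exp A) auto
  also have "\<dots> \<le> exp (\<alpha> * (q - 1)) / q powr t"
    using q p by (intro divide_right_mono) (auto intro: mult_right_mono)
  also have "\<dots> = exp (- \<alpha>) * (exp 1 * \<alpha> / t) powr t"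
  proof -
    have "\<alpha> * (q - 1) = t - \<alpha>" using t by (simp add: q_def field_simps)
    moreover have "(exp 1 * \<alpha> / t) powr t = exp t / q powr t"
      using t by (simp add: q_def powr_def ln_mult ln_div algebra_simps exp_add exp_diff)
    ultimately show ?thesis by (simp add: exp_diff exp_minus field_simps)
  qed
  finally show ?thesis .
qed

lemma bernoulli_lower_tail:
  fixes p \<mu> c :: real
  assumes A: "finite A" "W \<subseteq> A" and p: "0 \<le> p" "p \<le> 1" "c \<le> p * card W"
    and \<mu>: "0 < \<mu>" "\<mu> \<le> 1" and c: "0 \<le> c"
  shows "bernoulli_avg p A (\<lambda>\<sigma>. of_bool (card {x\<in>W. \<sigma> x} \<le> \<mu> * c))
     \<le> exp (- c) * (exp 1 / \<mu>) powr (\<mu> * c)"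
proof -
  have markov: "of_bool (real N \<le> \<mu> * c) \<le> \<mu> ^ N / \<mu> powr (\<mu> * c)" for N
  proof (cases "real N \<le> \<mu> * c")
    case True
    then have "\<mu> powr (\<mu> * c) \<le> \<mu> ^ N" using \<mu> by (metis powr_mono' powr_realpow less_imp_le)
    then show ?thesis using True \<mu> by simp
  qed (use \<mu> in simp)
  have "bernoulli_avg p A (\<lambda>\<sigma>. of_bool (card {x\<in>W. \<sigma> x} \<le> \<mu> * c))
      \<le> bernoulli_avg p A (\<lambda>\<sigma>. \<mu> ^ card {x\<in>W. \<sigma> x}) / \<mu> powr (\<mu> * c)"
    unfolding weighted_avg_divide[symmetric]
    by (intro weighted_avg_mono bernoulli_weight_nonneg p markov)
  also have "\<dots> \<le> exp (p * card W * (\<mu> - 1)) / \<mu> powr (\<mu> * c)"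
    using \<mu> p by (intro divide_right_mono bernoulli_avg_power_card_le_exp A) auto
  also have "\<dots> \<le> exp (c * (\<mu> - 1)) / \<mu> powr (\<mu> * c)"
    using \<mu> p by (intro divide_right_mono) (auto intro: mult_right_mono_neg)
  also have "\<dots> = exp (- c) * (exp 1 / \<mu>) powr (\<mu> * c)"
  proof -
    have "(exp 1 / \<mu>) powr (\<mu> * c) = exp (\<mu> * c) / \<mu> powr (\<mu> * c)"
      using \<mu> by (simp add: powr_def ln_div algebra_simps exp_diff)
    then show ?thesis by (simp add: algebra_simps exp_diff exp_minus field_simps flip: exp_add)
  qed
  finally show ?thesis .
qed

section \<open>The layered bound on the failure probability\<close>

lemma ex_index_switch_on:
  fixes k :: nat
  shows "\<not> U 0 \<Longrightarrow> U k \<Longrightarrow> \<exists>i\<in>{1..k}. U i \<and> \<not> U (i - 1)"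
proof (induction k)
  case (Suc k)
  then show ?case by (cases "U k") auto
qed simp

lemma le_layered_sum:
  fixes g :: real and th :: "nat \<Rightarrow> nat \<Rightarrow> real"
  assumes "\<not> U 0" "\<not> V 0" "\<And>i j. 0 \<le> th i j" "g \<le> 1"
    and th: "\<And>i j. i \<in> {1..k} \<Longrightarrow> j \<in> {1..l} \<Longrightarrow> U i \<Longrightarrow> V j \<Longrightarrow> g \<le> th i j"
  shows "g \<le> (\<Sum>i=1..k. \<Sum>j=1..l. th i j * of_bool (\<not> U (i - 1)) * of_bool (\<not> V (j - 1)))
              + of_bool (\<not> U k) + of_bool (\<not> V l)"
    (is "g \<le> (\<Sum>i=1..k. \<Sum>j=1..l. ?t i j) + _ + _")
proof -
  have t: "0 \<le> ?t i j" for i j using assms(3) by simp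
  show ?thesis
  proof (cases "U k \<and> V l")
    case True
    then obtain i j where i: "i \<in> {1..k}" "U i" "\<not> U (i - 1)" and j: "j \<in> {1..l}" "V j" "\<not> V (j - 1)"
      using ex_index_switch_on[of U k] ex_index_switch_on[of V l] assms(1,2) by blast
    have "g \<le> ?t i j" using th[OF i(1) j(1) i(2) j(2)] i(3) j(3) by simp
    also have "\<dots> \<le> (\<Sum>j=1..l. ?t i j)" using j(1) t by (intro member_le_sum) auto
    also have "\<dots> \<le> (\<Sum>i=1..k. \<Sum>j=1..l. ?t i j)" using i(1) t by (intro member_le_sum sum_nonneg) auto
    finally show ?thesis using True by simp
  next
    case False
    have "0 \<le> (\<Sum>i=1..k. \<Sum>j=1..l. ?t i j)" using t by (intro sum_nonneg)
    then show ?thesis using False assms(4) by auto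
  qed
qed

definition error_bound :: "real \<Rightarrow> real \<Rightarrow> (nat \<Rightarrow> real) \<Rightarrow> (nat \<Rightarrow> real) \<Rightarrow> nat \<Rightarrow> nat \<Rightarrow> real" where
  "error_bound \<alpha> r \<mu> \<nu> k l =
     (\<Sum>i=1..k. \<Sum>j=1..l. theta \<alpha> r \<mu> \<nu> i j * zeta \<alpha> r \<mu> (i - 1) * xi \<alpha> r \<nu> (j - 1))
     + zeta \<alpha> r \<mu> k + xi \<alpha> r \<nu> l"

lemma error_bound_nonneg: "0 \<le> error_bound \<alpha> r \<mu> \<nu> k l"
  unfolding error_bound_def theta_def zeta_def xi_def
  by (intro add_nonneg_nonneg sum_nonneg mult_nonneg_nonneg) auto

lemma xi_eq:
  assumes "0 < j" "1 < r" "0 < \<alpha>" "\<alpha> \<le> \<nu> j * log 2 r"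
  shows "xi \<alpha> r \<nu> j = exp (- \<alpha>) * (exp 1 * \<alpha> / (\<nu> j * log 2 r)) powr (\<nu> j * log 2 r)"
proof -
  define t where "t = \<nu> j * log 2 r"
  have "0 < t" using assms t_def by linarith
  have "- (\<nu> j * log 2 (t / (exp 1 * \<alpha>))) * ln r = t * ln (exp 1 * \<alpha> / t)"
    using assms \<open>0 < t\<close> by (simp add: t_def log_def ln_div ln_mult field_simps)
  then show ?thesis
    using assms \<open>0 < t\<close> by (simp add: xi_def powr_def flip: t_def)
qed

lemma one_minus_half_power_le_theta:
  fixes X Y :: nat and r \<alpha> :: real and \<mu> \<nu> :: "nat \<Rightarrow> real"
  assumes "1 < r" "\<mu> i * \<alpha> * r < Y" "X < \<nu> j * log 2 r"
  shows "(1 - (1/2) ^ X) ^ Y \<le> theta \<alpha> r \<mu> \<nu> i j"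
proof -
  have "r powr (- \<nu> j) = 2 powr (- (\<nu> j * log 2 r))"
    using assms(1) by (simp add: powr_def log_def)
  also have "\<dots> \<le> 2 powr (- real X)"
    using assms(3) by (intro powr_mono) auto
  also have "\<dots> = (1/2) ^ X"
    by (simp add: powr_minus powr_realpow power_one_over inverse_eq_divide)
  finally have "\<mu> i * \<alpha> * r * r powr (- \<nu> j) \<le> Y * (1/2) ^ X"
    using assms(2) by (intro mult_mono) auto
  moreover have "r * r powr (- \<nu> j) = r powr (1 - \<nu> j)"
    using assms(1) powr_add[of r 1 "- \<nu> j"] by simp
  ultimately have "\<mu> i * \<alpha> * r powr (1 - \<nu> j) \<le> Y * (1/2) ^ X"
    by (simp add: mult.assoc)
  have "(1 - (1/2::real) ^ X) ^ Y \<le> exp (- ((1/2) ^ X)) ^ Y"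
    using exp_ge_add_one_self[of "- ((1/2) ^ X)"] by (intro power_mono) (auto simp: power_le_one)
  also have "\<dots> = exp (- (Y * (1/2) ^ X))"
    by (simp add: exp_of_nat_mult[symmetric])
  also have "\<dots> \<le> theta \<alpha> r \<mu> \<nu> i j"
    unfolding theta_def using \<open>\<mu> i * \<alpha> * r powr (1 - \<nu> j) \<le> Y * (1/2) ^ X\<close> by simp
  finally show ?thesis .
qed

lemma bernoulli_lower_tail_le_zeta:
  fixes p \<alpha> r :: real
  assumes "finite A" "W \<subseteq> A" "0 \<le> p" "p \<le> 1" "\<alpha> * r \<le> p * card W" "0 < \<alpha>" "1 < r"
    and "0 < i \<Longrightarrow> 0 < \<mu> i \<and> \<mu> i \<le> 1"
  shows "bernoulli_avg p A (\<lambda>\<sigma>. of_bool (i = 0 \<or> card {x\<in>W. \<sigma> x} \<le> \<mu> i * \<alpha> * r)) \<le> zeta \<alpha> r \<mu> i"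
proof (cases "i = 0")
  case True
  then show ?thesis using assms(1) by (simp add: zeta_def weighted_avg_const sum_bernoulli_weight)
next
  case False
  then show ?thesis
    using bernoulli_lower_tail[of A W p "\<alpha> * r" "\<mu> i"] assms by (simp add: zeta_def mult.assoc)
qed

lemma bernoulli_upper_tail_le_xi:
  fixes p \<alpha> r :: real
  assumes "finite A" "L \<subseteq> A" "0 \<le> p" "p \<le> 1" "p * card L \<le> \<alpha>" "0 < \<alpha>" "1 < r"
    and "0 < j \<Longrightarrow> \<alpha> / log 2 r \<le> \<nu> j"
  shows "bernoulli_avg p A (\<lambda>\<sigma>. of_bool (j = 0 \<or> \<nu> j * log 2 r \<le> card {x\<in>L. \<sigma> x})) \<le> xi \<alpha> r \<nu> j"
proof (cases "j = 0")
  case True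
  then show ?thesis using assms(1) by (simp add: xi_def weighted_avg_const sum_bernoulli_weight)
next
  case False
  then have "\<alpha> \<le> \<nu> j * log 2 r" using assms(7,8) by (simp add: divide_le_eq)
  then show ?thesis
    using False bernoulli_upper_tail[of A L p \<alpha> "\<nu> j * log 2 r"] xi_eq[of j r \<alpha> \<nu>] assms by simp
qed

lemma bernoulli_avg_failure_le_error_bound:
  fixes p \<alpha> r :: real and \<mu> \<nu> :: "nat \<Rightarrow> real"
  assumes A: "finite A" "W \<subseteq> A" "L \<subseteq> A" and p: "0 \<le> p" "p \<le> 1"
    and pW: "\<alpha> * r \<le> p * card W" and pL: "p * card L \<le> \<alpha>"
    and \<alpha>: "0 < \<alpha>" and r: "1 < r"
    and \<mu>: "\<forall>i\<in>{1..k}. 0 < \<mu> i \<and> \<mu> i \<le> 1"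
    and \<nu>: "\<forall>j\<in>{1..l}. \<alpha> / log 2 r \<le> \<nu> j"
  shows "bernoulli_avg p A (\<lambda>\<sigma>. bernoulli_avg p A (\<lambda>\<tau>.
           (1 - (1/2) ^ card {x\<in>L. \<sigma> x}) ^ card {x\<in>W. \<tau> x})) \<le> error_bound \<alpha> r \<mu> \<nu> k l"
proof -
  define X where "X \<sigma> = card {x\<in>L. \<sigma> x}" for \<sigma> :: "'a \<Rightarrow> bool"
  define Y where "Y \<tau> = card {x\<in>W. \<tau> x}" for \<tau> :: "'a \<Rightarrow> bool"
  define low where "low i \<tau> = (of_bool (i = 0 \<or> Y \<tau> \<le> \<mu> i * \<alpha> * r) :: real)" for i \<tau>
  define high where "high j \<sigma> = (of_bool (j = 0 \<or> \<nu> j * log 2 r \<le> X \<sigma>) :: real)" for j \<sigma>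
  let ?th = "theta \<alpha> r \<mu> \<nu>" and ?E = "bernoulli_avg p A"
  have w: "\<And>\<sigma>. 0 \<le> bernoulli_weight p A \<sigma>" "sum (bernoulli_weight p A) (A \<rightarrow>\<^sub>E UNIV) = 1"
    by (simp_all add: bernoulli_weight_nonneg p sum_bernoulli_weight A(1))
  have layered: "(1 - (1/2) ^ X \<sigma>) ^ Y \<tau>
      \<le> (\<Sum>i=1..k. \<Sum>j=1..l. ?th i j * high (j - 1) \<sigma> * low (i - 1) \<tau>) + low k \<tau> + high l \<sigma>" for \<sigma> \<tau>
  proof -
    have "(1 - (1/2) ^ X \<sigma>) ^ Y \<tau>
        \<le> (\<Sum>i=1..k. \<Sum>j=1..l. ?th i j * low (i - 1) \<tau> * high (j - 1) \<sigma>) + low k \<tau> + high l \<sigma>"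
      unfolding low_def high_def
      by (rule le_layered_sum[where U = "\<lambda>i. 0 < i \<and> \<mu> i * \<alpha> * r < Y \<tau>"
            and V = "\<lambda>j. 0 < j \<and> X \<sigma> < \<nu> j * log 2 r", unfolded de_Morgan_conj not_gr_zero, unfolded not_less])
        (use one_minus_half_power_le_theta[OF r] in \<open>auto simp: theta_def power_le_one\<close>)
    then show ?thesis by (simp add: mult_ac)
  qed
  have "?E (\<lambda>\<sigma>. ?E (\<lambda>\<tau>. (1 - (1/2) ^ X \<sigma>) ^ Y \<tau>))
      \<le> ?E (\<lambda>\<sigma>. ?E (\<lambda>\<tau>. (\<Sum>i=1..k. \<Sum>j=1..l. ?th i j * high (j - 1) \<sigma> * low (i - 1) \<tau>)
           + low k \<tau> + high l \<sigma>))"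
    by (intro weighted_avg_mono w layered)
  also have "\<dots> = (\<Sum>i=1..k. \<Sum>j=1..l. ?th i j * ?E (high (j - 1)) * ?E (low (i - 1)))
      + ?E (low k) + ?E (high l)"
    by (simp add: weighted_avg_add weighted_avg_sum weighted_avg_mult_left weighted_avg_mult_right
        weighted_avg_const w)
  also have "\<dots> \<le> error_bound \<alpha> r \<mu> \<nu> k l"
  proof -
    have low: "?E (low i) \<le> zeta \<alpha> r \<mu> i" if "i \<le> k" for i
      unfolding low_def Y_def using \<mu> that by (intro bernoulli_lower_tail_le_zeta A p pW \<alpha> r) auto
    have high: "?E (high j) \<le> xi \<alpha> r \<nu> j" if "j \<le> l" for j
      unfolding high_def X_def using \<nu> that by (intro bernoulli_upper_tail_le_xi A p pL \<alpha> r) auto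
    have "?th i j * ?E (high (j - 1)) * ?E (low (i - 1)) \<le> ?th i j * zeta \<alpha> r \<mu> (i - 1) * xi \<alpha> r \<nu> (j - 1)"
      if "i \<in> {1..k}" "j \<in> {1..l}" for i j
    proof -
      have "?E (high (j - 1)) * ?E (low (i - 1)) \<le> xi \<alpha> r \<nu> (j - 1) * zeta \<alpha> r \<mu> (i - 1)"
        using high[of "j - 1"] low[of "i - 1"] that
        by (intro mult_mono) (auto simp: xi_def low_def intro: weighted_avg_nonneg w)
      then show ?thesis
        by (simp add: mult.assoc mult.commute[of "zeta _ _ _ _"] mult_left_mono theta_def)
    qed
    then show ?thesis
      unfolding error_bound_def using low[of k] high[of l] by (intro add_mono sum_mono) auto
  qed
  finally show ?thesis unfolding X_def Y_def .
qed

section \<open>Uniformly random relations\<close>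

lemma prod_of_bool: "finite A \<Longrightarrow> (\<Prod>x\<in>A. of_bool (P x) :: 'b :: comm_semiring_1) = of_bool (\<forall>x\<in>A. P x)"
  by (induction A rule: finite_induct) auto

abbreviation uniform_avg :: "'b set \<Rightarrow> ('b \<Rightarrow> real) \<Rightarrow> real" where
  "uniform_avg X \<equiv> weighted_avg (\<lambda>_. 1 / card X) X"

lemma uniform_avg_eq: "uniform_avg X f = sum f X / card X"
  unfolding weighted_avg_def by (simp add: sum_divide_distrib)

lemma sum_uniform_weight: "finite X \<Longrightarrow> X \<noteq> {} \<Longrightarrow> (\<Sum>x\<in>X. 1 / card X) = 1"
  by simp

lemma uniform_avg_PiE_prod:
  assumes "finite A" "W \<subseteq> A" "\<And>x. x \<in> A \<Longrightarrow> finite (B x)" "\<And>x. x \<in> A \<Longrightarrow> B x \<noteq> {}"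
  shows "uniform_avg (PiE A B) (\<lambda>g. \<Prod>x\<in>W. h x (g x)) = (\<Prod>x\<in>W. uniform_avg (B x) (h x))"
proof -
  have W: "{x\<in>A. x \<in> W} = W" using assms(2) by blast
  have extend: "(\<Prod>x\<in>W. g x) = (\<Prod>x\<in>A. if x \<in> W then g x else 1)" for g :: "'a \<Rightarrow> real"
    using prod.inter_filter[OF assms(1), of g "\<lambda>x. x \<in> W"] by (simp add: W)
  have "uniform_avg (PiE A B) (\<lambda>g. \<Prod>x\<in>W. h x (g x))
      = (\<Sum>g\<in>PiE A B. \<Prod>x\<in>A. if x \<in> W then h x (g x) else 1) / (\<Prod>x\<in>A. card (B x))"
    unfolding uniform_avg_eq extend by (simp add: card_PiE assms(1) if_distrib)
  also have "\<dots> = (\<Prod>x\<in>A. (\<Sum>y\<in>B x. if x \<in> W then h x y else 1) / card (B x))"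
    by (simp add: prod_sum_PiE assms(1,3) prod_dividef)
  also have "\<dots> = (\<Prod>x\<in>W. uniform_avg (B x) (h x))"
    unfolding extend uniform_avg_eq using assms(3,4) by (intro prod.cong) auto
  finally show ?thesis .
qed

lemma uniform_avg_no_dominator:
  assumes "finite A" "W \<subseteq> A" "L \<subseteq> A"
  shows "uniform_avg (A \<rightarrow>\<^sub>E A \<rightarrow>\<^sub>E UNIV) (\<lambda>D. of_bool (\<not> (\<exists>w\<in>W. \<forall>l\<in>L. D w l)))
    = (1 - (1/2) ^ card L) ^ card W"
proof -
  have fin: "finite W" "finite L" using assms finite_subset by blast+
  have nonempty: "A \<rightarrow>\<^sub>E UNIV \<noteq> {}" by (simp add: PiE_eq_empty_iff)
  have finite_rows: "finite (A \<rightarrow>\<^sub>E (UNIV :: bool set))" using assms(1) by (simp add: finite_PiE)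
  have "of_bool (\<not> (\<exists>w\<in>W. \<forall>l\<in>L. D w l)) = (\<Prod>w\<in>W. 1 - (\<Prod>l\<in>L. of_bool (D w l)) :: real)" for D
    using fin by (simp add: prod_of_bool flip: of_bool_not_iff)
  then have "uniform_avg (A \<rightarrow>\<^sub>E A \<rightarrow>\<^sub>E UNIV) (\<lambda>D. of_bool (\<not> (\<exists>w\<in>W. \<forall>l\<in>L. D w l)))
      = (\<Prod>w\<in>W. uniform_avg (A \<rightarrow>\<^sub>E UNIV) (\<lambda>d. 1 - (\<Prod>l\<in>L. of_bool (d l))))"
    using uniform_avg_PiE_prod[OF assms(1,2), of "\<lambda>_. A \<rightarrow>\<^sub>E UNIV" "\<lambda>_ d. 1 - (\<Prod>l\<in>L. of_bool (d l))"]
    by (simp add: finite_rows nonempty)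
  also have "\<dots> = (\<Prod>w\<in>W. 1 - uniform_avg (A \<rightarrow>\<^sub>E UNIV) (\<lambda>d. \<Prod>l\<in>L. of_bool (d l)))"
    using weighted_avg_const[OF sum_uniform_weight[OF finite_rows nonempty]]
    by (simp add: weighted_avg_diff)
  also have "uniform_avg (A \<rightarrow>\<^sub>E UNIV) (\<lambda>d. \<Prod>l\<in>L. of_bool (d l)) = (1/2) ^ card L"
    using uniform_avg_PiE_prod[OF assms(1,3), of "\<lambda>_. UNIV" "\<lambda>_ b. of_bool b"]
    by (simp add: weighted_avg_def UNIV_bool)
  finally show ?thesis by simp
qed

text \<open>When agent 1 is the desired winner, its action w beats l iff \<open>\<not> D l w\<close>, i.e. iff
  \<open>opposite_rel A D w l\<close>; as D \<mapsto> opposite_rel A D is a bijection of the relations on A, that game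
  fails with the same probability as the one for agent 2.\<close>

definition opposite_rel :: "'a set \<Rightarrow> ('a \<Rightarrow> 'a \<Rightarrow> bool) \<Rightarrow> 'a \<Rightarrow> 'a \<Rightarrow> bool" where
  "opposite_rel A D = (\<lambda>w\<in>A. \<lambda>l\<in>A. \<not> D l w)"

lemma uniform_avg_opposite_rel:
  "uniform_avg (A \<rightarrow>\<^sub>E A \<rightarrow>\<^sub>E UNIV) (\<lambda>D. f (opposite_rel A D)) = uniform_avg (A \<rightarrow>\<^sub>E A \<rightarrow>\<^sub>E UNIV) f"
  unfolding uniform_avg_eq
  by (rule arg_cong[where f = "\<lambda>x. x / _"], rule sum.reindex_bij_witness[of _ "opposite_rel A" "opposite_rel A"])
    (auto simp: opposite_rel_def fun_eq_iff PiE_def extensional_def)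

section \<open>The sampled policy\<close>

definition active :: "('a \<Rightarrow> bool) \<Rightarrow> 'a option \<Rightarrow> bool" where
  "active \<sigma> a \<longleftrightarrow> (case a of None \<Rightarrow> False | Some x \<Rightarrow> \<sigma> x)"

definition second_wins :: "('a \<Rightarrow> bool) \<Rightarrow> ('a \<Rightarrow> bool) \<Rightarrow> ('a \<Rightarrow> 'a \<Rightarrow> bool) \<Rightarrow> 'a option \<Rightarrow> 'a option \<Rightarrow> real" where
  "second_wins \<sigma>1 \<sigma>2 D a1 a2 =
     (if active \<sigma>1 a1 \<and> active \<sigma>2 a2 then of_bool (D (the a2) (the a1))
      else if active \<sigma>2 a2 then 1 else if active \<sigma>1 a1 then 0 else 1/2)"

definition sampled_policy ::
    "('a \<Rightarrow> bool) \<Rightarrow> ('a \<Rightarrow> bool) \<Rightarrow> ('a \<Rightarrow> 'a \<Rightarrow> bool) \<Rightarrow> nat \<Rightarrow> 'a option \<Rightarrow> 'a option \<Rightarrow> real" where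
  "sampled_policy \<sigma>1 \<sigma>2 D i a1 a2 =
     (if i = 1 then 1 - second_wins \<sigma>1 \<sigma>2 D a1 a2 else second_wins \<sigma>1 \<sigma>2 D a1 a2)"

lemma second_wins_range: "0 \<le> second_wins \<sigma>1 \<sigma>2 D a1 a2" "second_wins \<sigma>1 \<sigma>2 D a1 a2 \<le> 1"
  unfolding second_wins_def by auto

lemma is_policy_sampled_policy: "is_policy A (sampled_policy \<sigma>1 \<sigma>2 D)"
  unfolding is_policy_def sampled_policy_def by (auto simp: second_wins_range)

lemma maximin_le:
  fixes F :: "'p \<Rightarrow> 'q \<Rightarrow> real"
  assumes "Sp \<noteq> {}" "\<And>p q. p \<in> Sp \<Longrightarrow> q \<in> Sq \<Longrightarrow> 0 \<le> F p q" "\<And>p. p \<in> Sp \<Longrightarrow> \<exists>q\<in>Sq. F p q \<le> c"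
  shows "(SUP p\<in>Sp. INF q\<in>Sq. F p q) \<le> c"
proof (rule cSUP_least[OF assms(1)])
  fix p assume p: "p \<in> Sp"
  then obtain q where q: "q \<in> Sq" "F p q \<le> c" using assms(3) by blast
  have "(INF q\<in>Sq. F p q) \<le> F p q"
    by (rule cINF_lower[OF _ q(1)]) (use assms(2) p in \<open>auto intro!: bdd_belowI2\<close>)
  then show "(INF q\<in>Sq. F p q) \<le> c" using q(2) by simp
qed

lemma pure_strategy_mixed: "finite X \<Longrightarrow> x \<in> X \<Longrightarrow> (\<lambda>y. of_bool (y = x)) \<in> mixed X"
  unfolding mixed_def by auto

lemma mixed_payoff_nonneg:
  assumes "p \<in> mixed X" "q \<in> mixed Y" "\<And>x y. x \<in> X \<Longrightarrow> y \<in> Y \<Longrightarrow> 0 \<le> f x y"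
  shows "0 \<le> (\<Sum>x\<in>X. \<Sum>y\<in>Y. p x * q y * f x y)"
  using assms unfolding mixed_def by (intro sum_nonneg mult_nonneg_nonneg) auto

lemma mixed_payoff_le_one:
  assumes "p \<in> mixed X" "q \<in> mixed Y" "\<And>x y. x \<in> X \<Longrightarrow> y \<in> Y \<Longrightarrow> f x y \<le> 1"
  shows "(\<Sum>x\<in>X. \<Sum>y\<in>Y. p x * q y * f x y) \<le> 1"
proof -
  have "(\<Sum>x\<in>X. \<Sum>y\<in>Y. p x * q y * f x y) \<le> (\<Sum>x\<in>X. \<Sum>y\<in>Y. p x * q y)"
    using assms unfolding mixed_def by (intro sum_mono) (auto intro!: mult_left_le)
  also have "\<dots> = 1" using assms(1,2) unfolding mixed_def by (simp add: sum_product[symmetric])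
  finally show ?thesis .
qed

lemma maximin_le_one:
  assumes "finite X" "finite Y" "x0 \<in> X" "y0 \<in> Y"
    and "\<And>x y. x \<in> X \<Longrightarrow> y \<in> Y \<Longrightarrow> 0 \<le> f x y \<and> f x y \<le> 1"
  shows "(SUP p\<in>mixed X. INF q\<in>mixed Y. \<Sum>x\<in>X. \<Sum>y\<in>Y. p x * q y * f x y) \<le> 1"
  using pure_strategy_mixed[OF assms(1,3)] pure_strategy_mixed[OF assms(2,4)] assms(5)
  by (intro maximin_le) (auto intro!: mixed_payoff_nonneg mixed_payoff_le_one)

lemma maximin_le_zero:
  assumes "finite X" "finite Y" "x0 \<in> X" "y0 \<in> Y" "\<And>x y. x \<in> X \<Longrightarrow> y \<in> Y \<Longrightarrow> 0 \<le> f x y"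
    and "\<And>x. x \<in> X \<Longrightarrow> f x y0 = 0"
  shows "(SUP p\<in>mixed X. INF q\<in>mixed Y. \<Sum>x\<in>X. \<Sum>y\<in>Y. p x * q y * f x y) \<le> 0"
proof (rule maximin_le)
  show "mixed X \<noteq> {}" using pure_strategy_mixed[OF assms(1,3)] by blast
  show "0 \<le> (\<Sum>x\<in>X. \<Sum>y\<in>Y. p x * q y * f x y)" if "p \<in> mixed X" "q \<in> mixed Y" for p q
    using that assms(5) by (rule mixed_payoff_nonneg)
  have "(\<Sum>x\<in>X. \<Sum>y\<in>Y. p x * of_bool (y = y0) * f x y) = 0" for p :: "'a \<Rightarrow> real"
    using assms(2,4,6) by (simp add: of_bool_def if_distrib if_distribR sum.delta cong: if_cong)
  then show "\<exists>q\<in>mixed Y. (\<Sum>x\<in>X. \<Sum>y\<in>Y. p x * q y * f x y) \<le> 0" for p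
    using pure_strategy_mixed[OF assms(2,4)] by (intro bexI[of _ "\<lambda>y. of_bool (y = y0)"]) auto
qed

lemma game_value_12_sampled_policy_le:
  assumes "finite (Cw s)" "finite (Cl s)"
  shows "game_value (sampled_policy \<sigma>1 \<sigma>2 D) Cw Cl 1 2 s
    \<le> of_bool (\<not> (\<exists>w\<in>{w\<in>Cw s. \<sigma>2 w}. \<forall>l\<in>{l\<in>Cl s. \<sigma>1 l}. D w l))"
proof -
  let ?W = "insert None (Some ` Cw s)" and ?L = "insert None (Some ` Cl s)"
  let ?M = "sampled_policy \<sigma>1 \<sigma>2 D 1"
  have fin: "finite ?W" "finite ?L" using assms by simp_all
  have M01: "0 \<le> ?M a b \<and> ?M a b \<le> 1" for a b by (simp add: sampled_policy_def second_wins_range)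
  have "game_value (sampled_policy \<sigma>1 \<sigma>2 D) Cw Cl 1 2 s
      = (SUP p\<in>mixed ?L. INF q\<in>mixed ?W. \<Sum>a\<in>?L. \<Sum>b\<in>?W. p a * q b * ?M a b)"
    unfolding game_value_def Let_def by simp
  also have "\<dots> \<le> of_bool (\<not> (\<exists>w\<in>{w\<in>Cw s. \<sigma>2 w}. \<forall>l\<in>{l\<in>Cl s. \<sigma>1 l}. D w l))"
  proof (cases "\<exists>w\<in>{w\<in>Cw s. \<sigma>2 w}. \<forall>l\<in>{l\<in>Cl s. \<sigma>1 l}. D w l")
    case True
    then obtain w where w: "w \<in> Cw s" "\<sigma>2 w" "\<forall>l\<in>Cl s. \<sigma>1 l \<longrightarrow> D w l" by blast
    have "?M a (Some w) = 0" if "a \<in> ?L" for a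
      using that w by (auto simp: sampled_policy_def second_wins_def active_def)
    then show ?thesis
      using True maximin_le_zero[OF fin(2,1), of None "Some w" ?M] M01 w(1) by simp
  next
    case False
    then show ?thesis using maximin_le_one[OF fin(2,1), of None None ?M] M01 by simp
  qed
  finally show ?thesis .
qed

lemma game_value_21_sampled_policy_le:
  assumes "finite (Cw s)" "finite (Cl s)"
  shows "game_value (sampled_policy \<sigma>1 \<sigma>2 D) Cw Cl 2 1 s
    \<le> of_bool (\<not> (\<exists>w\<in>{w\<in>Cw s. \<sigma>1 w}. \<forall>l\<in>{l\<in>Cl s. \<sigma>2 l}. \<not> D l w))"
proof -
  let ?W = "insert None (Some ` Cw s)" and ?L = "insert None (Some ` Cl s)"
  let ?M = "\<lambda>b a. sampled_policy \<sigma>1 \<sigma>2 D 2 a b"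
  have fin: "finite ?W" "finite ?L" using assms by simp_all
  have M01: "0 \<le> ?M b a \<and> ?M b a \<le> 1" for a b by (simp add: sampled_policy_def second_wins_range)
  have "game_value (sampled_policy \<sigma>1 \<sigma>2 D) Cw Cl 2 1 s
      = (SUP q\<in>mixed ?L. INF p\<in>mixed ?W. \<Sum>b\<in>?L. \<Sum>a\<in>?W. q b * p a * ?M b a)"
    unfolding game_value_def Let_def by (simp add: sum.swap[of _ ?W] mult.commute)
  also have "\<dots> \<le> of_bool (\<not> (\<exists>w\<in>{w\<in>Cw s. \<sigma>1 w}. \<forall>l\<in>{l\<in>Cl s. \<sigma>2 l}. \<not> D l w))"
  proof (cases "\<exists>w\<in>{w\<in>Cw s. \<sigma>1 w}. \<forall>l\<in>{l\<in>Cl s. \<sigma>2 l}. \<not> D l w")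
    case True
    then obtain w where w: "w \<in> Cw s" "\<sigma>1 w" "\<forall>l\<in>Cl s. \<sigma>2 l \<longrightarrow> \<not> D l w" by blast
    have "?M b (Some w) = 0" if "b \<in> ?L" for b
      using that w by (auto simp: sampled_policy_def second_wins_def active_def)
    then show ?thesis
      using True maximin_le_zero[OF fin(2,1), of None "Some w" ?M] M01 w(1) by simp
  next
    case False
    then show ?thesis using maximin_le_one[OF fin(2,1), of None None ?M] M01 by simp
  qed
  finally show ?thesis .
qed

definition scenario_error ::
    "('s \<Rightarrow> 'a set) \<Rightarrow> ('s \<Rightarrow> 'a set) \<Rightarrow> (nat \<Rightarrow> 'a option \<Rightarrow> 'a option \<Rightarrow> real) \<Rightarrow> 's \<Rightarrow> real" where
  "scenario_error Cw Cl M s = (game_value M Cw Cl 1 2 s + game_value M Cw Cl 2 1 s) / 2"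

lemma policy_error_eq_sum_scenario_error:
  "policy_error S P Cw Cl M = (\<Sum>s\<in>S. P s * scenario_error Cw Cl M s)"
  by (simp add: policy_error_def scenario_error_def)

lemma uniform_avg_scenario_error_le:
  assumes A: "finite A" "Cw s \<subseteq> A" "Cl s \<subseteq> A"
  shows "uniform_avg (A \<rightarrow>\<^sub>E A \<rightarrow>\<^sub>E UNIV) (\<lambda>D. scenario_error Cw Cl (sampled_policy \<sigma>1 \<sigma>2 D) s)
    \<le> ((1 - (1/2) ^ card {l\<in>Cl s. \<sigma>1 l}) ^ card {w\<in>Cw s. \<sigma>2 w}
        + (1 - (1/2) ^ card {l\<in>Cl s. \<sigma>2 l}) ^ card {w\<in>Cw s. \<sigma>1 w}) / 2"
proof -
  let ?R = "A \<rightarrow>\<^sub>E A \<rightarrow>\<^sub>E (UNIV :: bool set)"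
  let ?no_dom = "\<lambda>W L D. of_bool (\<not> (\<exists>w\<in>W. \<forall>l\<in>L. D w l)) :: real"
  let ?W1 = "{w\<in>Cw s. \<sigma>1 w}" and ?W2 = "{w\<in>Cw s. \<sigma>2 w}"
  let ?L1 = "{l\<in>Cl s. \<sigma>1 l}" and ?L2 = "{l\<in>Cl s. \<sigma>2 l}"
  have fin: "finite (Cw s)" "finite (Cl s)" using A finite_subset by blast+
  have opposite: "?no_dom ?W1 ?L2 (opposite_rel A D) = of_bool (\<not> (\<exists>w\<in>?W1. \<forall>l\<in>?L2. \<not> D l w))" for D
  proof -
    have "opposite_rel A D w l = (\<not> D l w)" if "w \<in> ?W1" "l \<in> ?L2" for w l
      using that A by (auto simp: opposite_rel_def)
    then have "(\<exists>w\<in>?W1. \<forall>l\<in>?L2. opposite_rel A D w l) = (\<exists>w\<in>?W1. \<forall>l\<in>?L2. \<not> D l w)"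
      by (intro bex_cong ball_cong refl)
    then show ?thesis by (simp only:)
  qed
  have "uniform_avg ?R (\<lambda>D. scenario_error Cw Cl (sampled_policy \<sigma>1 \<sigma>2 D) s)
      \<le> uniform_avg ?R (\<lambda>D. (?no_dom ?W2 ?L1 D + ?no_dom ?W1 ?L2 (opposite_rel A D)) / 2)"
    unfolding scenario_error_def opposite
    using game_value_12_sampled_policy_le[of Cw s Cl, OF fin] game_value_21_sampled_policy_le[of Cw s Cl, OF fin]
    by (intro weighted_avg_mono divide_right_mono add_mono) auto
  also have "\<dots> = (uniform_avg ?R (?no_dom ?W2 ?L1) + uniform_avg ?R (?no_dom ?W1 ?L2)) / 2"
    by (simp only: weighted_avg_divide weighted_avg_add uniform_avg_opposite_rel[of A "?no_dom ?W1 ?L2"])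
  also have "\<dots> = ((1 - (1/2) ^ card ?L1) ^ card ?W2 + (1 - (1/2) ^ card ?L2) ^ card ?W1) / 2"
    using A by (subst (1 2) uniform_avg_no_dominator) auto
  finally show ?thesis .
qed

lemma scenario_error_sampled_policy_le_one:
  assumes "finite (Cw s)" "finite (Cl s)"
  shows "scenario_error Cw Cl (sampled_policy \<sigma>1 \<sigma>2 D) s \<le> 1"
proof -
  have "of_bool b \<le> (1 :: real)" for b by simp
  then have "game_value (sampled_policy \<sigma>1 \<sigma>2 D) Cw Cl 1 2 s \<le> 1" "game_value (sampled_policy \<sigma>1 \<sigma>2 D) Cw Cl 2 1 s \<le> 1"
    using game_value_12_sampled_policy_le[of Cw s Cl, OF assms] game_value_21_sampled_policy_le[of Cw s Cl, OF assms]
      order_trans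
    by blast+
  then show ?thesis unfolding scenario_error_def by simp
qed

lemma bernoulli_avg_scenario_error_le:
  fixes p \<alpha> r :: real and \<mu> \<nu> :: "nat \<Rightarrow> real"
  assumes A: "finite A" "Cw s \<subseteq> A" "Cl s \<subseteq> A" and p: "0 \<le> p" "p \<le> 1"
    and pW: "\<alpha> * r \<le> p * card (Cw s)" and pL: "p * card (Cl s) \<le> \<alpha>"
    and \<alpha>: "0 < \<alpha>" and r: "1 < r"
    and \<mu>: "\<forall>i\<in>{1..k}. 0 < \<mu> i \<and> \<mu> i \<le> 1"
    and \<nu>: "\<forall>j\<in>{1..l}. \<alpha> / log 2 r \<le> \<nu> j"
  shows "bernoulli_avg p A (\<lambda>\<sigma>1. bernoulli_avg p A (\<lambda>\<sigma>2.
           uniform_avg (A \<rightarrow>\<^sub>E A \<rightarrow>\<^sub>E UNIV) (\<lambda>D. scenario_error Cw Cl (sampled_policy \<sigma>1 \<sigma>2 D) s)))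
    \<le> error_bound \<alpha> r \<mu> \<nu> k l"
proof -
  define failure where "failure \<sigma> \<tau> = (1 - (1/2::real) ^ card {l\<in>Cl s. \<sigma> l}) ^ card {w\<in>Cw s. \<tau> w}"
    for \<sigma> \<tau>
  have w: "\<And>\<sigma>. 0 \<le> bernoulli_weight p A \<sigma>" "sum (bernoulli_weight p A) (A \<rightarrow>\<^sub>E UNIV) = 1"
    by (simp_all add: bernoulli_weight_nonneg p sum_bernoulli_weight A(1))
  have failure: "bernoulli_avg p A (\<lambda>\<sigma>. bernoulli_avg p A (\<lambda>\<tau>. failure \<sigma> \<tau>)) \<le> error_bound \<alpha> r \<mu> \<nu> k l"
    unfolding failure_def by (intro bernoulli_avg_failure_le_error_bound A p pW pL \<alpha> r \<mu> \<nu>)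
  have "bernoulli_avg p A (\<lambda>\<sigma>1. bernoulli_avg p A (\<lambda>\<sigma>2.
          uniform_avg (A \<rightarrow>\<^sub>E A \<rightarrow>\<^sub>E UNIV) (\<lambda>D. scenario_error Cw Cl (sampled_policy \<sigma>1 \<sigma>2 D) s)))
      \<le> bernoulli_avg p A (\<lambda>\<sigma>1. bernoulli_avg p A (\<lambda>\<sigma>2. (failure \<sigma>1 \<sigma>2 + failure \<sigma>2 \<sigma>1) / 2))"
    unfolding failure_def by (intro weighted_avg_mono w uniform_avg_scenario_error_le A)
  also have "\<dots> \<le> error_bound \<alpha> r \<mu> \<nu> k l"
    using failure
    by (simp add: weighted_avg_divide weighted_avg_add weighted_avg_swap[where f = "\<lambda>\<sigma>1 \<sigma>2. failure \<sigma>2 \<sigma>1"])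
  finally show ?thesis .
qed

lemma bernoulli_avg_policy_error_le:
  fixes A :: "'a set" and S :: "'s set" and m n k l :: nat and \<epsilon> \<alpha> :: real
  assumes game: "ckddg A S P Cw Cl" and n: "0 < n" "n < m"
    and bad: "(\<Sum>s\<in>{s\<in>S. card (Cw s) < m \<or> card (Cl s) > n}. P s) \<le> \<epsilon>"
    and \<alpha>: "0 < \<alpha>" "\<alpha> \<le> 1"
    and \<mu>: "\<forall>i\<in>{1..k}. 0 < \<mu> i \<and> \<mu> i \<le> 1"
    and \<nu>: "\<forall>j\<in>{1..l}. \<alpha> / log 2 (real m / real n) \<le> \<nu> j"
  shows "bernoulli_avg (\<alpha> / n) A (\<lambda>\<sigma>1. bernoulli_avg (\<alpha> / n) A (\<lambda>\<sigma>2.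
           uniform_avg (A \<rightarrow>\<^sub>E A \<rightarrow>\<^sub>E UNIV) (\<lambda>D. policy_error S P Cw Cl (sampled_policy \<sigma>1 \<sigma>2 D))))
    \<le> error_bound \<alpha> (real m / real n) \<mu> \<nu> k l + \<epsilon>"
proof -
  have A: "finite A" and S: "finite S" and P: "\<And>s. s \<in> S \<Longrightarrow> 0 \<le> P s" "sum P S = 1"
    and C: "\<And>s. s \<in> S \<Longrightarrow> Cw s \<subseteq> A" "\<And>s. s \<in> S \<Longrightarrow> Cl s \<subseteq> A"
    using game unfolding ckddg_def by auto
  define p where "p = \<alpha> / n"
  define r where "r = real m / real n"
  define B where "B = error_bound \<alpha> r \<mu> \<nu> k l"
  define bad_at where "bad_at s \<longleftrightarrow> card (Cw s) < m \<or> card (Cl s) > n" for s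
  define avg_error where "avg_error s = bernoulli_avg p A (\<lambda>\<sigma>1. bernoulli_avg p A (\<lambda>\<sigma>2.
    uniform_avg (A \<rightarrow>\<^sub>E A \<rightarrow>\<^sub>E UNIV) (\<lambda>D. scenario_error Cw Cl (sampled_policy \<sigma>1 \<sigma>2 D) s)))" for s
  have p: "0 \<le> p" "p \<le> 1" using \<alpha> n by (auto simp: p_def field_simps)
  have w: "\<And>\<sigma>. 0 \<le> bernoulli_weight p A \<sigma>" "sum (bernoulli_weight p A) (A \<rightarrow>\<^sub>E UNIV) = 1"
    "\<And>D. 0 \<le> 1 / card (A \<rightarrow>\<^sub>E A \<rightarrow>\<^sub>E (UNIV :: bool set))"
    "sum (\<lambda>_. 1 / card (A \<rightarrow>\<^sub>E A \<rightarrow>\<^sub>E (UNIV :: bool set))) (A \<rightarrow>\<^sub>E A \<rightarrow>\<^sub>E (UNIV :: bool set)) = 1"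
    using p A by (auto simp: bernoulli_weight_nonneg sum_bernoulli_weight finite_PiE PiE_eq_empty_iff
        intro!: sum_uniform_weight)
  have "avg_error s \<le> 1" if "s \<in> S" for s
  proof -
    have "finite (Cw s)" "finite (Cl s)" using C[OF that] A finite_subset by blast+
    then have "avg_error s \<le> bernoulli_avg p A (\<lambda>\<sigma>1. bernoulli_avg p A (\<lambda>\<sigma>2.
        uniform_avg (A \<rightarrow>\<^sub>E A \<rightarrow>\<^sub>E (UNIV :: bool set)) (\<lambda>D. 1)))"
      unfolding avg_error_def by (intro weighted_avg_mono w scenario_error_sampled_policy_le_one) auto
    then show ?thesis by (simp add: weighted_avg_const[OF w(4)] weighted_avg_const[OF w(2)])
  qed
  moreover have "avg_error s \<le> B" if "s \<in> S" "\<not> bad_at s" for s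
  proof -
    have "\<alpha> * r \<le> p * card (Cw s)" "p * card (Cl s) \<le> \<alpha>"
      using that(2) n \<alpha> by (auto simp: bad_at_def p_def r_def field_simps)
    then show ?thesis
      unfolding avg_error_def B_def using n \<mu> \<nu>
      by (intro bernoulli_avg_scenario_error_le A C[OF that(1)] p \<alpha>(1)) (auto simp: r_def)
  qed
  ultimately have "(\<Sum>s\<in>S. P s * avg_error s) \<le> (\<Sum>s\<in>S. P s * B + (if bad_at s then P s else 0))"
    using P(1) error_bound_nonneg[of \<alpha> r \<mu> \<nu> k l]
    by (intro sum_mono) (force simp: B_def intro: order.trans[OF mult_left_mono])
  also have "\<dots> \<le> B + \<epsilon>"
    using bad by (simp add: sum.distrib P(2) sum_distrib_right[symmetric] sum.inter_filter[OF S] bad_at_def)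
  finally show ?thesis
    unfolding avg_error_def policy_error_eq_sum_scenario_error p_def B_def r_def
    by (simp add: weighted_avg_sum weighted_avg_mult_left)
qed

theorem theorem5p1:
  fixes A :: "'a set" and S :: "'s set" and P :: "'s \<Rightarrow> real"
    and Cw Cl :: "'s \<Rightarrow> 'a set"
    and m n k l :: nat and \<epsilon> \<alpha> :: real and \<mu> \<nu> :: "nat \<Rightarrow> real"
  assumes game: "ckddg A S P Cw Cl"
    and mpos: "m > 0" and npos: "n > 0"
    and eps: "\<epsilon> \<in> {0..1}"
    and bad: "(\<Sum>s\<in>{s\<in>S. card (Cw s) < m \<or> card (Cl s) > n}. P s) \<le> \<epsilon>"
    and mn: "m > n"
    and alpha: "0 < \<alpha>" "\<alpha> \<le> 1"
    and kpos: "k > 0" and lpos: "l > 0"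
    and mu_range: "\<forall>i\<in>{1..k}. 0 < \<mu> i \<and> \<mu> i \<le> 1"
    and mu_mono: "\<forall>i j. 1 \<le> i \<and> i \<le> j \<and> j \<le> k \<longrightarrow> \<mu> j \<le> \<mu> i"
    and nu_range: "\<forall>j\<in>{1..l}. \<nu> j \<ge> \<alpha> / log 2 (real m / real n)"
    and nu_mono: "\<forall>i j. 1 \<le> i \<and> i \<le> j \<and> j \<le> l \<longrightarrow> \<nu> i \<le> \<nu> j"
  shows "\<exists>M. is_policy A M \<and>
    policy_error S P Cw Cl M \<le>
      (let r = real m / real n in
        (\<Sum>i=1..k. \<Sum>j=1..l. theta \<alpha> r \<mu> \<nu> i j * zeta \<alpha> r \<mu> (i - 1) * xi \<alpha> r \<nu> (j - 1))
        + zeta \<alpha> r \<mu> k + xi \<alpha> r \<nu> l + \<epsilon>)"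
proof -
  let ?p = "\<alpha> / n" and ?B = "error_bound \<alpha> (real m / real n) \<mu> \<nu> k l + \<epsilon>"
  let ?R = "A \<rightarrow>\<^sub>E A \<rightarrow>\<^sub>E (UNIV :: bool set)"
  have A: "finite A" using game by (simp add: ckddg_def)
  have "0 \<le> ?p" "?p \<le> 1" using alpha npos by (auto simp: field_simps)
  then have sample: "finite (A \<rightarrow>\<^sub>E (UNIV :: bool set))" "\<And>\<sigma>. 0 \<le> bernoulli_weight ?p A \<sigma>"
    "sum (bernoulli_weight ?p A) (A \<rightarrow>\<^sub>E UNIV) = 1"
    using A by (simp_all add: finite_PiE bernoulli_weight_nonneg sum_bernoulli_weight)
  have relation: "finite ?R" "\<And>D. 0 \<le> 1 / card ?R" "sum (\<lambda>_. 1 / card ?R) ?R = 1"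
    using A by (auto simp: finite_PiE PiE_eq_empty_iff intro!: sum_uniform_weight)
  obtain \<sigma>1 where "bernoulli_avg ?p A (\<lambda>\<sigma>2. uniform_avg ?R
      (\<lambda>D. policy_error S P Cw Cl (sampled_policy \<sigma>1 \<sigma>2 D))) \<le> ?B"
    using weighted_avg_le_imp_ex[OF sample bernoulli_avg_policy_error_le] game npos mn bad alpha
      mu_range nu_range by blast
  then obtain \<sigma>2 where "uniform_avg ?R (\<lambda>D. policy_error S P Cw Cl (sampled_policy \<sigma>1 \<sigma>2 D)) \<le> ?B"
    using weighted_avg_le_imp_ex[OF sample] by blast
  then obtain D where "policy_error S P Cw Cl (sampled_policy \<sigma>1 \<sigma>2 D) \<le> ?B"
    using weighted_avg_le_imp_ex[OF relation] by blast
  then show ?thesis using is_policy_sampled_policy unfolding error_bound_def Let_def by blast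
qed

end
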